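(* Let $n,m\ge1$ and $P\in\mathbb{C}[x_1,\dots,x_n]$. Then $P$ is invariant under the quasi-symmetrizing action of $G_{n,m}$ (i.e. $g\bullet P=P$ for all $g\in G_{n,m}$) if and only if there exists a quasi-symmetric polynomial $Q\in\mathbb{C}[x_1,\dots,x_n]$ such that $P(x_1,\dots,x_n)=Q(x_1^m,\dots,x_n^m)$.
   Context: $G_{n,m}$ is the group of $n\times n$ matrices having exactly one non-zero entry in each row and each column, these entries being $m$-th roots of unity. For $g\in G_{n,m}$, $w(g)$ is the product of its non-zero entries, $|g|$ the permutation matrix of entrywise moduli, and $\sigma_g$ the permutation with $(x_1,\dots,x_n)\cdot{}^t|g|=(x_{\sigma_g(1)},\dots,x_{\sigma_g(n)})$. The quasi-symmetrizing action is linear and defined on monomials by: for $a_1<\dots<a_l$ and positive integers $K=(k_1,\dots,k_l)$, $g\bullet(x_{a_1}^{k_1}\cdots x_{a_l}^{k_l})=w(g)^{c(K)}x_{b_1}^{k_1}\cdots x_{b_l}^{k_l}$, where $b_1<\dots<b_l$ is the increasing rearrangement of $\sigma_g(a_1),\dots,\sigma_g(a_l)$, and $c(K)=0$ if all $k_i$ are divisible by $m$, $c(K)=1$ otherwise. For $\nu\in\mathbb{N}^n$, let $c(\nu)$ be the composition obtained by deleting the zero entries of $\nu$; a polynomial $Q$ is quasi-symmetric if the coefficients of $x^\nu$ and $x^\mu$ in $Q$ are equal whenever $c(\nu)=c(\mu)$. *)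

theory Defs
  imports Complex_Main
begin

text \<open>Polynomials in C[x_1,...,x_n] are represented by their coefficient functions:
  an exponent vector is a list of naturals of length n (index i stands for x_(i+1)),
  and a polynomial is a finitely supported function from exponent vectors of length n
  to complex numbers.\<close>

definition is_poly :: "nat \<Rightarrow> (nat list \<Rightarrow> complex) \<Rightarrow> bool" where
  "is_poly n P \<longleftrightarrow> finite {\<nu>. P \<nu> \<noteq> 0} \<and> (\<forall>\<nu>. P \<nu> \<noteq> 0 \<longrightarrow> length \<nu> = n)"

definition comp_of :: "nat list \<Rightarrow> nat list" where
  "comp_of \<nu> = filter (\<lambda>k. k \<noteq> 0) \<nu>"

definition quasi_symmetric :: "nat \<Rightarrow> (nat list \<Rightarrow> complex) \<Rightarrow> bool" where
  "quasi_symmetric n Q \<longleftrightarrow>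
     (\<forall>\<nu> \<mu>. length \<nu> = n \<longrightarrow> length \<mu> = n \<longrightarrow> comp_of \<nu> = comp_of \<mu> \<longrightarrow> Q \<nu> = Q \<mu>)"

definition in_G :: "nat \<Rightarrow> nat \<Rightarrow> (nat \<Rightarrow> nat \<Rightarrow> complex) \<Rightarrow> bool" where
  "in_G n m g \<longleftrightarrow>
     (\<forall>i j. (i \<ge> n \<or> j \<ge> n) \<longrightarrow> g i j = 0) \<and>
     (\<forall>i<n. \<exists>!j. j < n \<and> g i j \<noteq> 0) \<and>
     (\<forall>j<n. \<exists>!i. i < n \<and> g i j \<noteq> 0) \<and>
     (\<forall>i<n. \<forall>j<n. g i j \<noteq> 0 \<longrightarrow> g i j ^ m = 1)"

text \<open>sigma_g: (x_1..x_n) * transpose |g| = (x_sigma(1), ..., x_sigma(n)),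
  i.e. sigma_g(i) is the column of the nonzero entry of row i.\<close>
definition sigma_g :: "nat \<Rightarrow> (nat \<Rightarrow> nat \<Rightarrow> complex) \<Rightarrow> nat \<Rightarrow> nat" where
  "sigma_g n g i = (THE j. j < n \<and> g i j \<noteq> 0)"

definition w_g :: "nat \<Rightarrow> (nat \<Rightarrow> nat \<Rightarrow> complex) \<Rightarrow> complex" where
  "w_g n g = (\<Prod>i<n. g i (sigma_g n g i))"

text \<open>Exponent transport: x_{a_1}^{k_1}...x_{a_l}^{k_l} (a increasing) goes to
  x_{b_1}^{k_1}...x_{b_l}^{k_l}, b the increasing rearrangement of sigma(a_1),...,sigma(a_l).
  Position j of the result is nonzero iff j is in B = sigma(support), and then it carries
  the r-th entry of the composition, where r = number of elements of B below j.\<close>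
definition transport :: "nat \<Rightarrow> (nat \<Rightarrow> nat) \<Rightarrow> nat list \<Rightarrow> nat list" where
  "transport n \<sigma> \<nu> =
     (let B = \<sigma> ` {i. i < n \<and> \<nu> ! i \<noteq> 0}
      in map (\<lambda>j. if j \<in> B then comp_of \<nu> ! card {j' \<in> B. j' < j} else 0) [0..<n])"

definition cK :: "nat \<Rightarrow> nat list \<Rightarrow> nat" where
  "cK m \<nu> = (if \<forall>k \<in> set (comp_of \<nu>). m dvd k then 0 else 1)"

definition qs_action :: "nat \<Rightarrow> nat \<Rightarrow> (nat \<Rightarrow> nat \<Rightarrow> complex) \<Rightarrow> (nat list \<Rightarrow> complex)
    \<Rightarrow> (nat list \<Rightarrow> complex)" where
  "qs_action n m g P = (\<lambda>\<mu>. \<Sum>\<nu> \<in> {\<nu>. P \<nu> \<noteq> 0}.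
       if transport n (sigma_g n g) \<nu> = \<mu> then w_g n g ^ cK m \<nu> * P \<nu> else 0)"

text \<open>P(x_1,...,x_n) = Q(x_1^m,...,x_n^m), in terms of coefficients.\<close>
definition subst_pow :: "nat \<Rightarrow> nat \<Rightarrow> (nat list \<Rightarrow> complex) \<Rightarrow> (nat list \<Rightarrow> complex) \<Rightarrow> bool" where
  "subst_pow n m P Q \<longleftrightarrow>
     (\<forall>\<nu>. length \<nu> = n \<longrightarrow>
        P \<nu> = (if \<forall>k \<in> set \<nu>. m dvd k then Q (map (\<lambda>k. k div m) \<nu>) else 0))"

end

theory Submission
  imports Defs
begin

text \<open>If \<open>P\<close> is invariant, its coefficients are constant on exponent vectors with a common
  composition, since a permutation matrix moves \<open>x\<^sup>\<nu>\<close> to any \<open>x\<^sup>\<mu>\<close> with the same composition (take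
  a permutation mapping the support of \<open>\<nu>\<close> onto that of \<open>\<mu>\<close>); and they vanish unless all exponents
  are divisible by \<open>m\<close>, since \<open>diag(\<zeta>,1,\<dots>,1)\<close>, \<open>\<zeta>\<close> a nontrivial \<open>m\<close>-th root of unity, fixes
  \<open>x\<^sup>\<nu>\<close> up to the factor \<open>\<zeta>\<close> whenever some exponent of \<open>\<nu>\<close> is not divisible by \<open>m\<close>. Conversely,
  every \<open>g \<in> G\<^sub>n\<^sub>,\<^sub>m\<close> permutes exponent vectors preserving compositions and acts without a scalar
  factor on monomials whose exponents are all divisible by \<open>m\<close>. The two conditions on \<open>P\<close> say
  precisely that \<open>P(x) = Q(x\<^sup>m)\<close> with \<open>Q\<close> quasi-symmetric.\<close>

subsection \<open>Supports and compositions\<close>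

definition supp :: "nat \<Rightarrow> nat list \<Rightarrow> nat set" where
  "supp n \<nu> = {i. i < n \<and> \<nu> ! i \<noteq> 0}"

lemma supp_subset_lessThan: "supp n \<nu> \<subseteq> {..<n}"
  unfolding supp_def by auto

lemma length_comp_of: "length (comp_of \<nu>) = card (supp (length \<nu>) \<nu>)"
  unfolding comp_of_def supp_def by (simp add: length_filter_conv_card)

lemma nonzero_if_mem_comp_of: "k \<in> set (comp_of \<nu>) \<Longrightarrow> k \<noteq> 0"
  unfolding comp_of_def by auto

lemma all_dvd_comp_of_iff: "(\<forall>k\<in>set (comp_of \<nu>). m dvd k) \<longleftrightarrow> (\<forall>k\<in>set \<nu>. m dvd k)"
  unfolding comp_of_def by (auto, metis dvd_0_right neq0_conv)

lemma cK_eq_0_iff: "cK m \<nu> = 0 \<longleftrightarrow> (\<forall>k\<in>set \<nu>. m dvd k)"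
  unfolding cK_def by (simp add: all_dvd_comp_of_iff)

lemma comp_of_map_div:
  assumes "\<forall>k\<in>set \<nu>. m dvd k"
  shows "comp_of (map (\<lambda>k. k div m) \<nu>) = map (\<lambda>k. k div m) (comp_of \<nu>)"
  using assms by (induction \<nu>) (auto simp: comp_of_def elim!: dvdE)

lemma comp_of_map_mult: "m \<ge> 1 \<Longrightarrow> comp_of (map (\<lambda>k. m * k) \<kappa>) = map (\<lambda>k. m * k) (comp_of \<kappa>)"
  by (induction \<kappa>) (auto simp: comp_of_def)

lemma list_eq_if_supp_comp_of_eq:
  "length \<nu> = length \<mu> \<Longrightarrow> supp (length \<nu>) \<nu> = supp (length \<mu>) \<mu> \<Longrightarrow> comp_of \<nu> = comp_of \<mu>
    \<Longrightarrow> \<nu> = \<mu>"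
proof (induction \<nu> \<mu> rule: list_induct2)
  case Nil
  then show ?case by simp
next
  case (Cons x xs y ys)
  have supp_Cons: "i \<in> supp (length (z # zs)) (z # zs) \<longleftrightarrow>
      (if i = 0 then z \<noteq> 0 else i - 1 \<in> supp (length zs) zs)" for i z and zs :: "nat list"
    unfolding supp_def by (cases i) auto
  have head: "x = 0 \<longleftrightarrow> y = 0"
    using Cons.prems(1) supp_Cons[of 0] by auto
  have tail: "supp (length xs) xs = supp (length ys) ys"
    using Cons.prems(1) supp_Cons[of "Suc _"] by (metis diff_Suc_1 nat.distinct(1) set_eqI)
  show ?case
    using head Cons.prems(2) Cons.IH[OF tail] by (cases "x = 0") (auto simp: comp_of_def)
qed

subsection \<open>Transport of exponent vectors\<close>

lemma map_rank_filter_upt: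
  "map (\<lambda>j. card {j'\<in>B. j' < j}) (filter (\<lambda>j. j \<in> B) [0..<n]) = [0..<card {j\<in>B. j < n}]"
proof (induction n)
  case 0
  then show ?case by simp
next
  case (Suc n)
  show ?case
  proof (cases "n \<in> B")
    case True
    have "{j\<in>B. j < Suc n} = insert n {j\<in>B. j < n}"
      using True by auto
    then have "card {j\<in>B. j < Suc n} = Suc (card {j\<in>B. j < n})"
      by simp
    then show ?thesis using Suc True by simp
  next
    case False
    then have "{j\<in>B. j < Suc n} = {j\<in>B. j < n}"
      using less_Suc_eq by auto
    then show ?thesis using Suc False by simp
  qed
qed

lemma transport_eq_map:
  "transport n \<sigma> \<nu> = map (\<lambda>j. if j \<in> \<sigma> ` supp n \<nu> then comp_of \<nu> ! card {j'\<in>\<sigma> ` supp n \<nu>. j' < j} else 0)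
     [0..<n]"
  unfolding transport_def supp_def Let_def by simp

lemma length_transport [simp]: "length (transport n \<sigma> \<nu>) = n"
  by (simp add: transport_eq_map)

context
  fixes n :: nat and \<sigma> :: "nat \<Rightarrow> nat" and \<nu> :: "nat list"
  assumes length_\<nu>: "length \<nu> = n"
    and inj_\<sigma>: "inj_on \<sigma> (supp n \<nu>)"
    and image_\<sigma>: "\<sigma> ` supp n \<nu> \<subseteq> {..<n}"
begin

lemma comp_of_nth_rank_nonzero:
  assumes j: "j \<in> \<sigma> ` supp n \<nu>"
  shows "comp_of \<nu> ! card {j'\<in>\<sigma> ` supp n \<nu>. j' < j} \<noteq> 0"
proof -
  have "finite (\<sigma> ` supp n \<nu>)"
    using image_\<sigma> finite_subset by blast
  moreover have "{j'\<in>\<sigma> ` supp n \<nu>. j' < j} \<subset> \<sigma> ` supp n \<nu>"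
    using j by auto
  ultimately have "card {j'\<in>\<sigma> ` supp n \<nu>. j' < j} < card (\<sigma> ` supp n \<nu>)"
    by (rule psubset_card_mono)
  also have "\<dots> = length (comp_of \<nu>)"
    using inj_\<sigma> length_\<nu> by (simp add: card_image length_comp_of)
  finally show ?thesis
    using nonzero_if_mem_comp_of nth_mem by blast
qed

lemma supp_transport: "supp n (transport n \<sigma> \<nu>) = \<sigma> ` supp n \<nu>"
  using comp_of_nth_rank_nonzero image_\<sigma>
  by (auto simp: transport_eq_map supp_def[of n "map _ _"] split: if_splits)

lemma comp_of_transport: "comp_of (transport n \<sigma> \<nu>) = comp_of \<nu>"
proof -
  let ?B = "\<sigma> ` supp n \<nu>"
  let ?rank = "\<lambda>j. card {j'\<in>?B. j' < j}"
  have "comp_of (transport n \<sigma> \<nu>) = map (\<lambda>j. comp_of \<nu> ! ?rank j) (filter (\<lambda>j. j \<in> ?B) [0..<n])"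
    using comp_of_nth_rank_nonzero
    by (auto simp: transport_eq_map comp_of_def[of "map _ _"] filter_map o_def
        intro!: map_cong filter_cong)
  also have "\<dots> = map (nth (comp_of \<nu>)) [0..<card {j\<in>?B. j < n}]"
    by (simp flip: map_rank_filter_upt)
  also have "{j\<in>?B. j < n} = ?B"
    using image_\<sigma> by auto
  also have "card ?B = length (comp_of \<nu>)"
    using inj_\<sigma> length_\<nu> by (simp add: card_image length_comp_of)
  finally show ?thesis
    by (simp add: map_nth)
qed

end

lemma transport_eq_iff:
  assumes \<sigma>: "bij_betw \<sigma> {..<n} {..<n}" and "length \<nu> = n" and "length \<mu> = n"
  shows "transport n \<sigma> \<nu> = \<mu> \<longleftrightarrow> \<sigma> ` supp n \<nu> = supp n \<mu> \<and> comp_of \<nu> = comp_of \<mu>"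
proof -
  have inj: "inj_on \<sigma> (supp n \<nu>)"
    using bij_betw_imp_inj_on[OF \<sigma>] supp_subset_lessThan by (rule inj_on_subset)
  have image: "\<sigma> ` supp n \<nu> \<subseteq> {..<n}"
    using bij_betwE[OF \<sigma>] supp_subset_lessThan[of n \<nu>] by blast
  note supp = supp_transport[OF assms(2) inj image]
    and comp = comp_of_transport[OF assms(2) inj image]
  show ?thesis
  proof
    assume "\<sigma> ` supp n \<nu> = supp n \<mu> \<and> comp_of \<nu> = comp_of \<mu>"
    then show "transport n \<sigma> \<nu> = \<mu>"
      using list_eq_if_supp_comp_of_eq[of "transport n \<sigma> \<nu>" \<mu>] supp comp assms(3) by simp
  next
    assume "transport n \<sigma> \<nu> = \<mu>"
    then show "\<sigma> ` supp n \<nu> = supp n \<mu> \<and> comp_of \<nu> = comp_of \<mu>"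
      using supp comp by simp
  qed
qed

lemma supp_comp_of_transport:
  assumes "bij_betw \<sigma> {..<n} {..<n}" and "length \<nu> = n"
  shows "supp n (transport n \<sigma> \<nu>) = \<sigma> ` supp n \<nu>" and "comp_of (transport n \<sigma> \<nu>) = comp_of \<nu>"
  using transport_eq_iff[OF assms, of "transport n \<sigma> \<nu>"] by simp_all

lemma transport_inj:
  assumes \<sigma>: "bij_betw \<sigma> {..<n} {..<n}" and "length \<nu> = n" and "length \<nu>' = n"
    and "transport n \<sigma> \<nu> = transport n \<sigma> \<nu>'"
  shows "\<nu> = \<nu>'"
proof -
  have "\<sigma> ` supp n \<nu> = \<sigma> ` supp n \<nu>'" "comp_of \<nu> = comp_of \<nu>'"
    using supp_comp_of_transport[OF \<sigma>] assms(2-4) by metis+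
  moreover have "inj_on \<sigma> {..<n}"
    using \<sigma> by (rule bij_betw_imp_inj_on)
  ultimately have "supp n \<nu> = supp n \<nu>'"
    by (simp add: inj_on_image_eq_iff supp_subset_lessThan)
  with \<open>comp_of \<nu> = comp_of \<nu>'\<close> show ?thesis
    using list_eq_if_supp_comp_of_eq assms(2,3) by simp
qed

lemma transport_surj:
  assumes \<sigma>: "bij_betw \<sigma> {..<n} {..<n}" and \<mu>: "length \<mu> = n"
  obtains \<nu> where "length \<nu> = n" "transport n \<sigma> \<nu> = \<mu>"
proof
  let ?\<tau> = "inv_into {..<n} \<sigma>"
  have \<tau>: "bij_betw ?\<tau> {..<n} {..<n}"
    using \<sigma> by (rule bij_betw_inv_into)
  have "\<sigma> ` supp n (transport n ?\<tau> \<mu>) = \<sigma> ` ?\<tau> ` supp n \<mu>"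
    using supp_comp_of_transport(1)[OF \<tau> \<mu>] by simp
  also have "\<dots> = supp n \<mu>"
    using bij_betw_inv_into_right[OF \<sigma>] supp_subset_lessThan[of n \<mu>] by (force simp: image_image)
  finally show "transport n \<sigma> (transport n ?\<tau> \<mu>) = \<mu>"
    using transport_eq_iff[OF \<sigma> length_transport \<mu>] supp_comp_of_transport(2)[OF \<tau> \<mu>] by simp
qed simp

subsection \<open>The group \<open>G\<^sub>n\<^sub>,\<^sub>m\<close>\<close>

lemma in_G_row_unique: "in_G n m g \<Longrightarrow> i < n \<Longrightarrow> \<exists>!j. j < n \<and> g i j \<noteq> 0"
  unfolding in_G_def by (drule conjunct1[OF conjunct2]) simp

lemma in_G_column_unique: "in_G n m g \<Longrightarrow> j < n \<Longrightarrow> \<exists>!i. i < n \<and> g i j \<noteq> 0"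
  unfolding in_G_def by (drule conjunct1[OF conjunct2[OF conjunct2]]) simp

lemma sigma_g_less:
  assumes "in_G n m g" "i < n"
  shows "sigma_g n g i < n" and "g i (sigma_g n g i) \<noteq> 0"
  using theI'[OF in_G_row_unique[OF assms]] unfolding sigma_g_def by auto

lemma sigma_g_eqI:
  assumes "in_G n m g" "i < n" "j < n" "g i j \<noteq> 0"
  shows "sigma_g n g i = j"
  unfolding sigma_g_def
  by (rule the1_equality[OF in_G_row_unique[OF assms(1,2)]]) (simp add: assms(3,4))

lemma bij_betw_sigma_g:
  assumes g: "in_G n m g"
  shows "bij_betw (sigma_g n g) {..<n} {..<n}"
proof -
  have "inj_on (sigma_g n g) {..<n}"
  proof (rule inj_onI)
    fix i i' assume "i \<in> {..<n}" "i' \<in> {..<n}" and eq: "sigma_g n g i = sigma_g n g i'"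
    then have "i < n" "i' < n"
      by simp_all
    moreover have "g i (sigma_g n g i) \<noteq> 0" "g i' (sigma_g n g i) \<noteq> 0"
      using sigma_g_less(2)[OF g \<open>i < n\<close>] sigma_g_less(2)[OF g \<open>i' < n\<close>] eq by simp_all
    ultimately show "i = i'"
      using in_G_column_unique[OF g sigma_g_less(1)[OF g \<open>i < n\<close>]] by blast
  qed
  moreover have "sigma_g n g ` {..<n} \<subseteq> {..<n}"
    using sigma_g_less(1)[OF g] by auto
  ultimately show ?thesis
    by (simp add: bij_betw_def endo_inj_surj)
qed

lemma qs_action_eq_0_if_length:
  "length \<mu> \<noteq> n \<Longrightarrow> qs_action n m g P \<mu> = 0"
  unfolding qs_action_def by (rule sum.neutral) auto

lemma qs_action_transport:
  assumes g: "in_G n m g" and P: "is_poly n P" and "length \<nu> = n"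
  shows "qs_action n m g P (transport n (sigma_g n g) \<nu>) = w_g n g ^ cK m \<nu> * P \<nu>"
proof -
  have "qs_action n m g P (transport n (sigma_g n g) \<nu>) =
     (\<Sum>\<nu>'\<in>{\<nu>. P \<nu> \<noteq> 0}. if \<nu>' = \<nu> then w_g n g ^ cK m \<nu>' * P \<nu>' else 0)"
    unfolding qs_action_def
    using P assms(3) transport_inj[OF bij_betw_sigma_g[OF g]]
    by (intro sum.cong) (auto simp: is_poly_def)
  also have "\<dots> = w_g n g ^ cK m \<nu> * P \<nu>"
    using P by (simp add: is_poly_def sum.delta')
  finally show ?thesis .
qed

definition monomial_matrix :: "nat \<Rightarrow> (nat \<Rightarrow> nat) \<Rightarrow> (nat \<Rightarrow> complex) \<Rightarrow> nat \<Rightarrow> nat \<Rightarrow> complex" where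
  "monomial_matrix n \<pi> c = (\<lambda>i j. if i < n \<and> j = \<pi> i then c i else 0)"

context
  fixes n m :: nat and \<pi> :: "nat \<Rightarrow> nat" and c :: "nat \<Rightarrow> complex"
  assumes \<pi>: "bij_betw \<pi> {..<n} {..<n}"
    and c_nonzero: "\<And>i. i < n \<Longrightarrow> c i \<noteq> 0"
    and c_root: "\<And>i. i < n \<Longrightarrow> c i ^ m = 1"
begin

lemma in_G_monomial_matrix: "in_G n m (monomial_matrix n \<pi> c)"
  unfolding in_G_def
proof (intro conjI allI impI)
  fix i j assume "n \<le> i \<or> n \<le> j"
  moreover have "\<pi> i < n" if "i < n"
    using that bij_betwE[OF \<pi>] by blast
  ultimately show "monomial_matrix n \<pi> c i j = 0"
    by (auto simp: monomial_matrix_def)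
next
  fix i assume "i < n"
  then have "\<pi> i < n" "c i \<noteq> 0"
    using bij_betwE[OF \<pi>] c_nonzero by auto
  then show "\<exists>!j. j < n \<and> monomial_matrix n \<pi> c i j \<noteq> 0"
    using \<open>i < n\<close> by (intro ex1I[of _ "\<pi> i"]) (simp_all add: monomial_matrix_def split: if_splits)
next
  fix j assume "j < n"
  then have "j \<in> \<pi> ` {..<n}"
    using bij_betw_imp_surj_on[OF \<pi>] by simp
  then obtain i where i: "i < n" "\<pi> i = j"
    by auto
  show "\<exists>!i. i < n \<and> monomial_matrix n \<pi> c i j \<noteq> 0"
  proof (rule ex1I[of _ i])
    show "i < n \<and> monomial_matrix n \<pi> c i j \<noteq> 0"
      using i c_nonzero by (simp add: monomial_matrix_def)
  next
    fix i' assume "i' < n \<and> monomial_matrix n \<pi> c i' j \<noteq> 0"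
    then have "i' < n" "\<pi> i' = \<pi> i"
      using i by (simp_all add: monomial_matrix_def split: if_splits)
    then show "i' = i"
      using inj_onD[OF bij_betw_imp_inj_on[OF \<pi>]] i(1) by simp
  qed
next
  fix i j assume "i < n" "monomial_matrix n \<pi> c i j \<noteq> 0"
  then show "monomial_matrix n \<pi> c i j ^ m = 1"
    using c_root by (simp add: monomial_matrix_def split: if_splits)
qed

lemma sigma_g_monomial_matrix:
  assumes "i < n"
  shows "sigma_g n (monomial_matrix n \<pi> c) i = \<pi> i"
proof -
  have "\<pi> i < n" "c i \<noteq> 0"
    using assms bij_betwE[OF \<pi>] c_nonzero by auto
  then show ?thesis
    using assms by (intro sigma_g_eqI[OF in_G_monomial_matrix]) (simp_all add: monomial_matrix_def)
qed

lemma w_g_monomial_matrix: "w_g n (monomial_matrix n \<pi> c) = (\<Prod>i<n. c i)"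
proof -
  have "monomial_matrix n \<pi> c i (sigma_g n (monomial_matrix n \<pi> c) i) = c i" if "i < n" for i
    unfolding sigma_g_monomial_matrix[OF that] using that by (simp add: monomial_matrix_def)
  then show ?thesis
    by (simp add: w_g_def)
qed

lemma coeff_eq_if_fixed_by_monomial_matrix:
  assumes P: "is_poly n P" and fixed: "qs_action n m (monomial_matrix n \<pi> c) P = P"
    and \<nu>: "length \<nu> = n" and \<mu>: "length \<mu> = n"
    and supp: "\<pi> ` supp n \<nu> = supp n \<mu>" and comp: "comp_of \<nu> = comp_of \<mu>"
  shows "P \<mu> = (\<Prod>i<n. c i) ^ cK m \<nu> * P \<nu>"
proof -
  let ?g = "monomial_matrix n \<pi> c"
  have "sigma_g n ?g ` supp n \<nu> = \<pi> ` supp n \<nu>"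
    using sigma_g_monomial_matrix supp_subset_lessThan[of n \<nu>] by (intro image_cong) auto
  then have "transport n (sigma_g n ?g) \<nu> = \<mu>"
    using transport_eq_iff[OF bij_betw_sigma_g[OF in_G_monomial_matrix] \<nu> \<mu>] supp comp by simp
  then show ?thesis
    using qs_action_transport[OF in_G_monomial_matrix P \<nu>] fixed by (simp add: w_g_monomial_matrix)
qed

end

lemma exists_nontrivial_root_of_unity:
  assumes "2 \<le> m"
  obtains \<zeta> :: complex where "\<zeta> ^ m = 1" "\<zeta> \<noteq> 1"
proof -
  let ?root = "\<lambda>k. cis (2 * pi * real k / real m)"
  have bij: "bij_betw ?root {..<m} {z. z ^ m = 1}"
    using assms by (intro bij_betw_roots_unity) simp
  have "?root 1 \<noteq> ?root 0"
    using inj_onD[OF bij_betw_imp_inj_on[OF bij], of 1 0] assms by fastforce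
  moreover have "?root 1 ^ m = 1"
    using bij_betw_apply[OF bij, of 1] assms by simp
  ultimately show ?thesis
    using that by simp
qed

lemma exists_bij_betw_image_eq:
  assumes "finite A" "S \<subseteq> A" "T \<subseteq> A" "card S = card T"
  obtains \<pi> where "bij_betw \<pi> A A" "\<pi> ` S = T"
proof -
  have "finite S" "finite T"
    using assms finite_subset by blast+
  then obtain f where f: "bij_betw f S T"
    using finite_same_card_bij assms(4) by blast
  have "card (A - S) = card (A - T)"
    using assms \<open>finite S\<close> \<open>finite T\<close> by (simp add: card_Diff_subset)
  then obtain h where h: "bij_betw h (A - S) (A - T)"
    using finite_same_card_bij assms(1) by blast
  let ?\<pi> = "\<lambda>i. if i \<in> S then f i else h i"
  have "bij_betw ?\<pi> S T" "bij_betw ?\<pi> (A - S) (A - T)"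
    using f h by (auto intro: bij_betw_cong[THEN iffD1, rotated])
  then have "bij_betw ?\<pi> (S \<union> (A - S)) (T \<union> (A - T))"
    by (rule bij_betw_combine) blast
  moreover have "S \<union> (A - S) = A" "T \<union> (A - T) = A"
    using assms by blast+
  ultimately have "bij_betw ?\<pi> A A"
    by simp
  moreover have "?\<pi> ` S = T"
    using \<open>bij_betw ?\<pi> S T\<close> by (simp add: bij_betw_def)
  ultimately show ?thesis
    using that by blast
qed

subsection \<open>Invariant polynomials\<close>

definition exponents_dvd :: "nat \<Rightarrow> (nat list \<Rightarrow> complex) \<Rightarrow> bool" where
  "exponents_dvd m P \<longleftrightarrow> (\<forall>\<nu>. P \<nu> \<noteq> 0 \<longrightarrow> (\<forall>k\<in>set \<nu>. m dvd k))"

lemma exponents_dvd_if_invariant: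
  assumes "m \<ge> 1" and P: "is_poly n P" and inv: "\<forall>g. in_G n m g \<longrightarrow> qs_action n m g P = P"
  shows "exponents_dvd m P"
  unfolding exponents_dvd_def
proof (intro allI impI)
  fix \<nu> assume P\<nu>: "P \<nu> \<noteq> 0"
  then have length_\<nu>: "length \<nu> = n"
    using P by (simp add: is_poly_def)
  show "\<forall>k\<in>set \<nu>. m dvd k"
  proof (cases "m = 1 \<or> n = 0")
    case True
    then show ?thesis
      using length_\<nu> by auto
  next
    case False
    then have "2 \<le> m" "0 < n"
      using \<open>m \<ge> 1\<close> by auto
    obtain \<zeta> :: complex where \<zeta>: "\<zeta> ^ m = 1" "\<zeta> \<noteq> 1"
      using exists_nontrivial_root_of_unity[OF \<open>2 \<le> m\<close>] by blast
    let ?c = "\<lambda>i. if i = 0 then \<zeta> else 1"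
    have c: "\<And>i. i < n \<Longrightarrow> ?c i \<noteq> 0" "\<And>i. i < n \<Longrightarrow> ?c i ^ m = 1"
      using \<zeta> \<open>2 \<le> m\<close> by (auto simp: power_0_left)
    have id: "bij_betw id {..<n} {..<n}"
      by simp
    have "P \<nu> = (\<Prod>i<n. ?c i) ^ cK m \<nu> * P \<nu>"
      using coeff_eq_if_fixed_by_monomial_matrix[where c = ?c, OF id c P _ length_\<nu> length_\<nu>]
        inv in_G_monomial_matrix[where c = ?c, OF id c] by simp
    then have "P \<nu> = \<zeta> ^ cK m \<nu> * P \<nu>"
      using \<open>0 < n\<close> by (simp add: prod.delta)
    then have "cK m \<nu> = 0"
      using P\<nu> \<zeta>(2) by (auto simp: cK_def split: if_splits)
    then show ?thesis
      by (simp add: cK_eq_0_iff)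
  qed
qed

lemma quasi_symmetric_if_invariant:
  assumes P: "is_poly n P" and inv: "\<forall>g. in_G n m g \<longrightarrow> qs_action n m g P = P"
  shows "quasi_symmetric n P"
  unfolding quasi_symmetric_def
proof (intro allI impI)
  fix \<nu> \<mu> :: "nat list"
  assume length_\<nu>: "length \<nu> = n" and length_\<mu>: "length \<mu> = n" and comp: "comp_of \<nu> = comp_of \<mu>"
  have "card (supp n \<nu>) = card (supp n \<mu>)"
    using length_comp_of[of \<nu>] length_comp_of[of \<mu>] length_\<nu> length_\<mu> comp by simp
  then obtain \<pi> where \<pi>: "bij_betw \<pi> {..<n} {..<n}" "\<pi> ` supp n \<nu> = supp n \<mu>"
    using exists_bij_betw_image_eq[OF finite_lessThan supp_subset_lessThan supp_subset_lessThan] by blast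
  have one: "\<And>i. i < n \<Longrightarrow> (1::complex) \<noteq> 0" "\<And>i. i < n \<Longrightarrow> (1::complex) ^ m = 1"
    by simp_all
  show "P \<nu> = P \<mu>"
    using coeff_eq_if_fixed_by_monomial_matrix[where c = "\<lambda>_. 1", OF \<pi>(1) one P _ length_\<nu> length_\<mu> \<pi>(2) comp]
      inv in_G_monomial_matrix[where c = "\<lambda>_. 1", OF \<pi>(1) one] by simp
qed

lemma invariant_if_quasi_symmetric:
  assumes P: "is_poly n P" and "quasi_symmetric n P" and "exponents_dvd m P" and g: "in_G n m g"
  shows "qs_action n m g P = P"
proof
  fix \<mu>
  show "qs_action n m g P \<mu> = P \<mu>"
  proof (cases "length \<mu> = n")
    case False
    then have "P \<mu> = 0"
      using P unfolding is_poly_def by blast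
    with qs_action_eq_0_if_length[OF False] show ?thesis
      by simp
  next
    case True
    have \<sigma>: "bij_betw (sigma_g n g) {..<n} {..<n}"
      using g by (rule bij_betw_sigma_g)
    obtain \<nu> where \<nu>: "length \<nu> = n" "transport n (sigma_g n g) \<nu> = \<mu>"
      by (rule transport_surj[OF \<sigma> True])
    then have "comp_of \<nu> = comp_of \<mu>"
      using transport_eq_iff[OF \<sigma> \<nu>(1) True] by simp
    then have "P \<nu> = P \<mu>"
      using \<open>quasi_symmetric n P\<close> \<nu>(1) True unfolding quasi_symmetric_def by blast
    have "qs_action n m g P \<mu> = w_g n g ^ cK m \<nu> * P \<nu>"
      using qs_action_transport[OF g P \<nu>(1)] \<nu>(2) by simp
    also have "\<dots> = P \<nu>"
    proof (cases "P \<nu> = 0")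
      case False
      then have "cK m \<nu> = 0"
        using \<open>exponents_dvd m P\<close> by (simp add: exponents_dvd_def cK_eq_0_iff)
      then show ?thesis
        by simp
    qed simp
    finally show ?thesis
      using \<open>P \<nu> = P \<mu>\<close> by simp
  qed
qed

lemma invariant_iff_quasi_symmetric_exponents_dvd:
  assumes "m \<ge> 1" and "is_poly n P"
  shows "(\<forall>g. in_G n m g \<longrightarrow> qs_action n m g P = P) \<longleftrightarrow> quasi_symmetric n P \<and> exponents_dvd m P"
  using exponents_dvd_if_invariant[OF assms] quasi_symmetric_if_invariant[OF assms(2)]
    invariant_if_quasi_symmetric[OF assms(2)]
  by blast

subsection \<open>Substitution of \<open>m\<close>-th powers\<close>

lemma exponents_dvd_if_subst_pow:
  assumes P: "is_poly n P" and PQ: "subst_pow n m P Q"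
  shows "exponents_dvd m P"
  unfolding exponents_dvd_def
proof (intro allI impI)
  fix \<nu> assume P\<nu>: "P \<nu> \<noteq> 0"
  then have "length \<nu> = n"
    using P by (simp add: is_poly_def)
  then have "P \<nu> = (if \<forall>k\<in>set \<nu>. m dvd k then Q (map (\<lambda>k. k div m) \<nu>) else 0)"
    using PQ unfolding subst_pow_def by blast
  with P\<nu> show "\<forall>k\<in>set \<nu>. m dvd k"
    by (cases "\<forall>k\<in>set \<nu>. m dvd k") simp_all
qed

lemma quasi_symmetric_if_subst_pow:
  assumes Q: "quasi_symmetric n Q" and PQ: "subst_pow n m P Q"
  shows "quasi_symmetric n P"
  unfolding quasi_symmetric_def
proof (intro allI impI)
  fix \<nu> \<mu> :: "nat list"
  assume length_\<nu>: "length \<nu> = n" and length_\<mu>: "length \<mu> = n" and comp: "comp_of \<nu> = comp_of \<mu>"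
  have P\<nu>: "P \<nu> = (if \<forall>k\<in>set \<nu>. m dvd k then Q (map (\<lambda>k. k div m) \<nu>) else 0)"
    and P\<mu>: "P \<mu> = (if \<forall>k\<in>set \<mu>. m dvd k then Q (map (\<lambda>k. k div m) \<mu>) else 0)"
    using PQ length_\<nu> length_\<mu> unfolding subst_pow_def by blast+
  have dvd_iff: "(\<forall>k\<in>set \<nu>. m dvd k) \<longleftrightarrow> (\<forall>k\<in>set \<mu>. m dvd k)"
    using all_dvd_comp_of_iff[of \<nu> m] all_dvd_comp_of_iff[of \<mu> m] comp by simp
  show "P \<nu> = P \<mu>"
  proof (cases "\<forall>k\<in>set \<nu>. m dvd k")
    case True
    then have "comp_of (map (\<lambda>k. k div m) \<nu>) = comp_of (map (\<lambda>k. k div m) \<mu>)"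
      using comp_of_map_div[of \<nu> m] comp_of_map_div[of \<mu> m] comp dvd_iff by simp
    then have "Q (map (\<lambda>k. k div m) \<nu>) = Q (map (\<lambda>k. k div m) \<mu>)"
      using Q length_\<nu> length_\<mu> unfolding quasi_symmetric_def by simp
    then show ?thesis
      using P\<nu> P\<mu> True dvd_iff by simp
  next
    case False
    then have "P \<nu> = 0" "P \<mu> = 0"
      using P\<nu> P\<mu> dvd_iff by (simp_all only: if_False)
    then show ?thesis
      by simp
  qed
qed

definition divide_exponents :: "nat \<Rightarrow> nat \<Rightarrow> (nat list \<Rightarrow> complex) \<Rightarrow> nat list \<Rightarrow> complex" where
  "divide_exponents n m P = (\<lambda>\<kappa>. if length \<kappa> = n then P (map (\<lambda>k. m * k) \<kappa>) else 0)"

context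
  fixes n m :: nat and P :: "nat list \<Rightarrow> complex"
  assumes m: "m \<ge> 1" and P: "is_poly n P"
begin

lemma is_poly_divide_exponents: "is_poly n (divide_exponents n m P)"
  unfolding is_poly_def
proof
  have "{\<kappa>. divide_exponents n m P \<kappa> \<noteq> 0} \<subseteq> map (\<lambda>k. k div m) ` {\<nu>. P \<nu> \<noteq> 0}"
  proof
    fix \<kappa> assume "\<kappa> \<in> {\<kappa>. divide_exponents n m P \<kappa> \<noteq> 0}"
    then have "P (map (\<lambda>k. m * k) \<kappa>) \<noteq> 0"
      unfolding divide_exponents_def by (auto split: if_splits)
    moreover have "\<kappa> = map (\<lambda>k. k div m) (map (\<lambda>k. m * k) \<kappa>)"
      using m by (simp add: map_idI)
    ultimately show "\<kappa> \<in> map (\<lambda>k. k div m) ` {\<nu>. P \<nu> \<noteq> 0}"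
      by blast
  qed
  moreover have "finite {\<nu>. P \<nu> \<noteq> 0}"
    using P by (simp add: is_poly_def)
  ultimately show "finite {\<kappa>. divide_exponents n m P \<kappa> \<noteq> 0}"
    using finite_subset by blast
qed (simp add: divide_exponents_def)

lemma quasi_symmetric_divide_exponents:
  "quasi_symmetric n P \<Longrightarrow> quasi_symmetric n (divide_exponents n m P)"
  unfolding quasi_symmetric_def divide_exponents_def using comp_of_map_mult[OF m] by simp

lemma subst_pow_divide_exponents:
  assumes "exponents_dvd m P"
  shows "subst_pow n m P (divide_exponents n m P)"
  unfolding subst_pow_def
proof (intro allI impI)
  fix \<nu> :: "nat list" assume "length \<nu> = n"
  show "P \<nu> = (if \<forall>k\<in>set \<nu>. m dvd k then divide_exponents n m P (map (\<lambda>k. k div m) \<nu>) else 0)"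
  proof (cases "\<forall>k\<in>set \<nu>. m dvd k")
    case True
    then have "map (\<lambda>k. m * (k div m)) \<nu> = \<nu>"
      by (simp add: map_idI)
    then show ?thesis
      using True \<open>length \<nu> = n\<close> by (simp add: divide_exponents_def o_def)
  next
    case False
    then show ?thesis
      using assms unfolding exponents_dvd_def by auto
  qed
qed

end

lemma exists_subst_pow_iff_quasi_symmetric_exponents_dvd:
  assumes "m \<ge> 1" and "is_poly n P"
  shows "(\<exists>Q. is_poly n Q \<and> quasi_symmetric n Q \<and> subst_pow n m P Q) \<longleftrightarrow>
    quasi_symmetric n P \<and> exponents_dvd m P"
proof
  assume "\<exists>Q. is_poly n Q \<and> quasi_symmetric n Q \<and> subst_pow n m P Q"
  then show "quasi_symmetric n P \<and> exponents_dvd m P"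
    using quasi_symmetric_if_subst_pow exponents_dvd_if_subst_pow[OF assms(2)] by blast
next
  assume "quasi_symmetric n P \<and> exponents_dvd m P"
  then show "\<exists>Q. is_poly n Q \<and> quasi_symmetric n Q \<and> subst_pow n m P Q"
    using is_poly_divide_exponents[OF assms] quasi_symmetric_divide_exponents[OF assms]
      subst_pow_divide_exponents[OF assms] by blast
qed

theorem mainTheorem2:
  fixes n m :: nat and P :: "nat list \<Rightarrow> complex"
  assumes "n \<ge> 1" and "m \<ge> 1" and "is_poly n P"
  shows "(\<forall>g. in_G n m g \<longrightarrow> qs_action n m g P = P) \<longleftrightarrow>
         (\<exists>Q. is_poly n Q \<and> quasi_symmetric n Q \<and> subst_pow n m P Q)"
  using invariant_iff_quasi_symmetric_exponents_dvd[OF assms(2,3)]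
    exists_subst_pow_iff_quasi_symmetric_exponents_dvd[OF assms(2,3)]
  by blast

end
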